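(* Let $d,n\in\mathbb{N}$, let $\mathcal{S}^*\subseteq\{1,\dots,d\}$, let $a_{1:n}\in(\{0,1\}^d)^n$ be arbitrary, and let $x_t:=h_{\mathcal{S}^*}(a_t)$ for $t=1,\dots,n$. Then the cumulative log-loss of the predictor $\pi_d$ satisfies $\mathcal{L}_n(\pi_d)=-\log_2\prod_{t=1}^n\pi_d(x_t\mid x_{<t};a_{1:t})\le (d+1)\log_2(n+1)$.
   Context: For $\mathcal{S}\subseteq\{1,\dots,d\}$ and $a\in\{0,1\}^d$, $h_{\mathcal{S}}(a)=\bigwedge_{i\in\mathcal{S}}a^i$ (equal to $1$ if $\mathcal{S}=\emptyset$), where $a^i$ is the $i$-th component of $a$. The predictor $\pi_d$ is defined as follows. At time $t$, let $\mathcal{D}_t:=\{i\in\{1,\dots,d\}: a_\tau^i=1\text{ for every }\tau<t\text{ with }x_\tau=1\}$ and $y_t:=\bigwedge_{i\in\mathcal{D}_t}a_t^i$ (equal to $1$ if $\mathcal{D}_t=\emptyset$). Then $\pi_d(x\mid x_{<t};a_{1:t}):=\frac{t}{t+1}$ if $x=y_t$ and $:=\frac{1}{t+1}$ if $x\ne y_t$, for $x\in\{0,1\}$. *)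

theory Defs
  imports "HOL-Analysis.Analysis"
begin

text \<open>Binary vectors a \<in> {0,1}^d are represented as predicates on indices (a i \<longleftrightarrow> a^i = 1),
  only the components i \<in> {1..d} matter. Bits are represented as bool (True = 1).
  Sequences are indexed by time t = 1,2,...\<close>

definition h :: "nat set \<Rightarrow> (nat \<Rightarrow> bool) \<Rightarrow> bool" where
  "h S a = (\<forall>i\<in>S. a i)"

definition Dset :: "nat \<Rightarrow> (nat \<Rightarrow> bool) \<Rightarrow> (nat \<Rightarrow> nat \<Rightarrow> bool) \<Rightarrow> nat \<Rightarrow> nat set" where
  "Dset d x a t = {i \<in> {1..d}. \<forall>\<tau>\<in>{1..<t}. x \<tau> \<longrightarrow> a \<tau> i}"

definition yt :: "nat \<Rightarrow> (nat \<Rightarrow> bool) \<Rightarrow> (nat \<Rightarrow> nat \<Rightarrow> bool) \<Rightarrow> nat \<Rightarrow> bool" where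
  "yt d x a t = (\<forall>i\<in>Dset d x a t. a t i)"

text \<open>pi_d(b | x_{<t}; a_{1:t}); depends only on x restricted to {1..<t} and a restricted to {1..t}.\<close>
definition pi_d :: "nat \<Rightarrow> bool \<Rightarrow> (nat \<Rightarrow> bool) \<Rightarrow> (nat \<Rightarrow> nat \<Rightarrow> bool) \<Rightarrow> nat \<Rightarrow> real" where
  "pi_d d b x a t = (if b = yt d x a t then real t / (real t + 1) else 1 / (real t + 1))"

definition cum_loss :: "nat \<Rightarrow> nat \<Rightarrow> (nat \<Rightarrow> bool) \<Rightarrow> (nat \<Rightarrow> nat \<Rightarrow> bool) \<Rightarrow> real" where
  "cum_loss d n x a = - log 2 (\<Prod>t\<in>{1..n}. pi_d d (x t) x a t)"

end

theory Submission
  imports Defs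
begin

(* Since x_t = h_S(a_t), every index of S survives in every D_t, so y_t = 1 forces x_t = 1:
   the predictor only errs by predicting 0 when x_t = 1, and then some index i of D_t with
   a_t^i = 0 leaves D_(t+1). Hence there are at most d mistakes. A correct prediction costs
   the factor t/(t+1), and these factors telescope to 1/(n+1) over t = 1..n; a mistake costs
   1/(t+1) >= t/(t+1) * 1/(n+1). So the product of the probabilities is at least
   (n+1)^-(d+1). *)

lemma Dset_subset: "Dset d x a t \<subseteq> {1..d}"
  unfolding Dset_def by auto

lemma finite_Dset: "finite (Dset d x a t)"
  by (rule finite_subset[OF Dset_subset]) simp

lemma card_Dset_le: "card (Dset d x a t) \<le> d"
  using card_mono[OF finite_atLeastAtMost Dset_subset] by simp

lemma Dset_antimono: "t \<le> t' \<Longrightarrow> Dset d x a t' \<subseteq> Dset d x a t"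
  unfolding Dset_def by auto

lemma Dset_Suc:
  assumes "1 \<le> t"
  shows "Dset d x a (Suc t) = (if x t then {i \<in> Dset d x a t. a t i} else Dset d x a t)"
proof -
  have "{1..<Suc t} = insert t {1..<t}" using assms by auto
  then show ?thesis unfolding Dset_def by auto
qed

lemma subset_Dset:
  assumes "S \<subseteq> {1..d}" and "\<And>\<tau>. \<tau> \<in> {1..<t} \<Longrightarrow> x \<tau> = h S (a \<tau>)"
  shows "S \<subseteq> Dset d x a t"
  using assms unfolding Dset_def h_def by auto

lemma Dset_Suc_psubset_if_mistake:
  assumes "1 \<le> t" and "S \<subseteq> Dset d x a t" and "x t = h S (a t)" and "x t \<noteq> yt d x a t"
  shows "Dset d x a (Suc t) \<subset> Dset d x a t"
proof -
  have "yt d x a t \<Longrightarrow> h S (a t)"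
    using assms(2) unfolding yt_def h_def by auto
  then have "x t" and "\<not> yt d x a t"
    using assms(3,4) by auto
  then obtain i where "i \<in> Dset d x a t" and "\<not> a t i"
    unfolding yt_def by auto
  moreover have "Dset d x a (Suc t) = {i \<in> Dset d x a t. a t i}"
    using Dset_Suc[OF assms(1)] \<open>x t\<close> by simp
  ultimately show ?thesis
    by blast
qed

lemma card_mistakes_le:
  assumes "S \<subseteq> {1..d}" and "\<And>t. t \<in> {1..n} \<Longrightarrow> x t = h S (a t)"
  shows "card {t \<in> {1..n}. x t \<noteq> yt d x a t} + card (Dset d x a (Suc n)) \<le> d"
  using assms(2)
proof (induction n)
  case 0
  show ?case using card_Dset_le by simp
next
  case (Suc n)
  let ?M = "\<lambda>n. {t \<in> {1..n}. x t \<noteq> yt d x a t}"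
  have IH: "card (?M n) + card (Dset d x a (Suc n)) \<le> d"
    using Suc by simp
  have M_Suc: "?M (Suc n) = (if x (Suc n) \<noteq> yt d x a (Suc n) then insert (Suc n) (?M n) else ?M n)"
    by (auto simp: atLeastAtMostSuc_conv)
  show ?case
  proof (cases "x (Suc n) = yt d x a (Suc n)")
    case True
    have "card (Dset d x a (Suc (Suc n))) \<le> card (Dset d x a (Suc n))"
      by (intro card_mono finite_Dset Dset_antimono) simp
    with IH True M_Suc show ?thesis by simp
  next
    case False
    have "S \<subseteq> Dset d x a (Suc n)"
      using assms(1) Suc.prems by (intro subset_Dset) auto
    then have "Dset d x a (Suc (Suc n)) \<subset> Dset d x a (Suc n)"
      using False Suc.prems by (intro Dset_Suc_psubset_if_mistake) auto
    then have "card (Dset d x a (Suc (Suc n))) < card (Dset d x a (Suc n))"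
      by (rule psubset_card_mono[OF finite_Dset])
    with IH False M_Suc show ?thesis by simp
  qed
qed

lemma prod_ratio_telescope: "(\<Prod>t\<in>{1..n}. real t / (real t + 1)) = 1 / (real n + 1)"
  by (induction n) (simp_all add: atLeastAtMostSuc_conv field_simps)

lemma prod_ge_inverse_power:
  fixes p :: "nat \<Rightarrow> real" and M :: "nat set"
  assumes "M \<subseteq> {1..n}" and "card M \<le> k"
    and "\<And>t. t \<in> {1..n} - M \<Longrightarrow> real t / (real t + 1) \<le> p t"
    and "\<And>t. t \<in> M \<Longrightarrow> 1 / (real t + 1) \<le> p t"
  shows "(1 / (real n + 1)) ^ (k + 1) \<le> (\<Prod>t\<in>{1..n}. p t)"
proof -
  define c where "c t = (if t \<in> M then 1 / (real n + 1) else 1)" for t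
  have "(1 / (real n + 1)) ^ (k + 1) \<le> (1 / (real n + 1)) ^ (card M + 1)"
    using assms(2) by (intro power_decreasing) auto
  also have "\<dots> = (\<Prod>t\<in>{1..n}. real t / (real t + 1)) * (\<Prod>t\<in>{1..n}. c t)"
    using assms(1) by (simp add: prod_ratio_telescope c_def prod.If_cases Int_absorb1 power_add del: One_nat_def)
  also have "\<dots> = (\<Prod>t\<in>{1..n}. real t / (real t + 1) * c t)"
    by (rule prod.distrib[symmetric])
  also have "\<dots> \<le> (\<Prod>t\<in>{1..n}. p t)"
  proof (rule prod_mono)
    fix t assume t: "t \<in> {1..n}"
    have "real t / (real t + 1) * (1 / (real n + 1)) = real t / (real n + 1) * (1 / (real t + 1))"
      by simp
    also have "\<dots> \<le> 1 * (1 / (real t + 1))"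
      using t by (intro mult_right_mono) auto
    finally have "real t / (real t + 1) * (1 / (real n + 1)) \<le> p t" if "t \<in> M"
      using assms(4)[OF that] by simp
    then show "0 \<le> real t / (real t + 1) * c t \<and> real t / (real t + 1) * c t \<le> p t"
      using t assms(3) by (auto simp: c_def ac_simps)
  qed
  finally show ?thesis .
qed

lemma minus_log_le_of_inverse_power_le:
  fixes N P b :: real
  assumes "1 < b" and "0 < N" and "(1 / N) ^ k \<le> P"
  shows "- log b P \<le> real k * log b N"
proof -
  have "0 < (1 / N) ^ k" using assms(2) by simp
  then have "0 < P" using assms(3) by linarith
  then have "log b ((1 / N) ^ k) \<le> log b P"
    using assms(1,3) \<open>0 < (1 / N) ^ k\<close> by (simp only: log_le_cancel_iff)
  moreover have "log b ((1 / N) ^ k) = - (real k * log b N)"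
    using assms(1,2) by (simp add: log_nat_power log_divide)
  ultimately show ?thesis by linarith
qed

theorem theorem5:
  fixes d n :: nat and S :: "nat set" and a :: "nat \<Rightarrow> nat \<Rightarrow> bool" and x :: "nat \<Rightarrow> bool"
  assumes "S \<subseteq> {1..d}"
    and "\<And>t. t \<in> {1..n} \<Longrightarrow> x t = h S (a t)"
  shows "cum_loss d n x a \<le> real (d + 1) * log 2 (real n + 1)"
proof -
  let ?M = "{t \<in> {1..n}. x t \<noteq> yt d x a t}"
  have "card ?M + card (Dset d x a (Suc n)) \<le> d"
    using assms by (rule card_mistakes_le)
  then have "card ?M \<le> d"
    by linarith
  then have "(1 / (real n + 1)) ^ (d + 1) \<le> (\<Prod>t\<in>{1..n}. pi_d d (x t) x a t)"
    by (intro prod_ge_inverse_power) (auto simp: pi_d_def divide_right_mono)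
  then show ?thesis
    unfolding cum_loss_def by (intro minus_log_le_of_inverse_power_le) auto
qed

end
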